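(* Let $\mathcal{M}=(E,\mathcal{I})$ be a matroid with rank function $r_{\mathcal{M}}$ and $E=\{e_1,\dots,e_n\}$, let $E_0$ be its set of loops, and let $E_1,\dots,E_k$ and $r_1,\dots,r_k$ be the ground sets and ranks of the principal minors of $\mathcal{M}\setminus E_0$. Let $\mathcal{P}$ be the partition matroid on $E$, with rank function $r_{\mathcal{P}}$, whose independent sets are the sets $\bigcup_{i=1}^k I_i$ with $I_i\subseteq E_i$ and $|I_i|\leq r_i$. Let $\sigma$ be a uniformly random permutation of $[n]$ and for $1\leq j\leq n$ let $A^\sigma_j=\{e_{\sigma(1)},\dots,e_{\sigma(j)}\}$. Then for every $1\leq j\leq n$, $$\mathbb{E}_\sigma[r_{\mathcal{P}}(A^\sigma_j)]\geq(1-1/e)\,\mathbb{E}_\sigma[r_{\mathcal{M}}(A^\sigma_j)].$$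
   Context: Principal sequence: for a loopless matroid $\mathcal{N}$ on ground set $S$ with rank function $r$, there are unique sets $\emptyset=F_0\subsetneq F_1\subsetneq\dots\subsetneq F_k=S$ and values $\infty>\lambda_1>\dots>\lambda_k\geq 1$ such that $\lambda_1,\dots,\lambda_k$ are exactly the values $\lambda$ for which $f_\lambda(X)=\lambda r(X)-|X|$ ($X\subseteq S$) has more than one minimizer, and the unique minimal and maximal minimizers of $f_{\lambda_i}$ are $F_{i-1}$ and $F_i$. The principal minors are $\mathcal{M}_i=(\mathcal{N}/F_{i-1})|_{E_i}$ with ground set $E_i=F_i\setminus F_{i-1}$ and rank $r_i$. *)

theory Defs
  imports "HOL-Probability.Probability" "HOL-Combinatorics.Permutations"
begin

definition matroid :: "'a set \<Rightarrow> 'a set set \<Rightarrow> bool" where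
  "matroid E I \<longleftrightarrow> finite E \<and> (\<forall>X\<in>I. X \<subseteq> E) \<and> {} \<in> I \<and>
     (\<forall>X Y. X \<in> I \<and> Y \<subseteq> X \<longrightarrow> Y \<in> I) \<and>
     (\<forall>X Y. X \<in> I \<and> Y \<in> I \<and> card X < card Y \<longrightarrow> (\<exists>x\<in>Y - X. insert x X \<in> I))"

definition rk :: "'a set set \<Rightarrow> 'a set \<Rightarrow> nat" where
  "rk I X = Max {card Y | Y. Y \<subseteq> X \<and> Y \<in> I}"

definition loops :: "'a set \<Rightarrow> 'a set set \<Rightarrow> 'a set" where
  "loops E I = {x\<in>E. {x} \<notin> I}"

definition restrict_matroid :: "'a set set \<Rightarrow> 'a set \<Rightarrow> 'a set set" where
  "restrict_matroid I S = {X\<in>I. X \<subseteq> S}"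

definition flam :: "'a set set \<Rightarrow> real \<Rightarrow> 'a set \<Rightarrow> real" where
  "flam N lam X = lam * real (rk N X) - real (card X)"

definition minimizers :: "'a set set \<Rightarrow> 'a set \<Rightarrow> real \<Rightarrow> 'a set set" where
  "minimizers N S lam = {X. X \<subseteq> S \<and> (\<forall>Y. Y \<subseteq> S \<longrightarrow> flam N lam X \<le> flam N lam Y)}"

definition principal_sequence ::
  "'a set set \<Rightarrow> 'a set \<Rightarrow> nat \<Rightarrow> (nat \<Rightarrow> 'a set) \<Rightarrow> (nat \<Rightarrow> real) \<Rightarrow> bool" where
  "principal_sequence N S k F lam \<longleftrightarrow>
     F 0 = {} \<and> F k = S \<and> (\<forall>i<k. F i \<subset> F (Suc i)) \<and>
     (\<forall>i. 1 \<le> i \<and> i < k \<longrightarrow> lam (Suc i) < lam i) \<and>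
     (1 \<le> k \<longrightarrow> 1 \<le> lam k) \<and>
     {l. \<exists>X Y. X \<noteq> Y \<and> X \<in> minimizers N S l \<and> Y \<in> minimizers N S l} = lam ` {1..k} \<and>
     (\<forall>i\<in>{1..k}.
        F (i - 1) \<in> minimizers N S (lam i) \<and> (\<forall>X\<in>minimizers N S (lam i). F (i - 1) \<subseteq> X) \<and>
        F i \<in> minimizers N S (lam i) \<and> (\<forall>X\<in>minimizers N S (lam i). X \<subseteq> F i))"

definition contract_rk :: "'a set set \<Rightarrow> 'a set \<Rightarrow> 'a set \<Rightarrow> nat" where
  "contract_rk N F X = rk N (X \<union> F) - rk N F"

text \<open>Ground set E_i and rank r_i of the i-th principal minor (N/F_{i-1})|E_i.\<close>
definition minor_ground :: "(nat \<Rightarrow> 'a set) \<Rightarrow> nat \<Rightarrow> 'a set" where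
  "minor_ground F i = F i - F (i - 1)"

definition minor_rank :: "'a set set \<Rightarrow> (nat \<Rightarrow> 'a set) \<Rightarrow> nat \<Rightarrow> nat" where
  "minor_rank N F i = contract_rk N (F (i - 1)) (minor_ground F i)"

definition partition_indep :: "nat \<Rightarrow> (nat \<Rightarrow> 'a set) \<Rightarrow> (nat \<Rightarrow> nat) \<Rightarrow> 'a set set" where
  "partition_indep k Es rs =
     {X. \<exists>Is. (\<forall>i\<in>{1..k}. Is i \<subseteq> Es i \<and> card (Is i) \<le> rs i) \<and> X = (\<Union>i\<in>{1..k}. Is i)}"

end

theory Submission
  imports Defs
begin

text \<open>Write p = j / n and E_i, r_i for the ground sets and ranks of the principal minors.
  Since F_(i-1) and F_i both minimise lam_i r(X) - |X|, we have |E_i| = lam_i r_i, and as lam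
  decreases there is a threshold t with p lam_i \<ge> 1 exactly for i \<le> t. For a random j-prefix A
  the count |A \<inter> E_i| has mean p |E_i|. Contracting F_t gives r(A) \<le> r(F_t) + |A - F_t|, whose
  expectation is the sum over i of min (p |E_i|) r_i. The partition rank of A is the sum over i
  of min |A \<inter> E_i| r_i, and each term has expectation at least (1 - 1/e) min (p |E_i|) r_i: every
  new position hits E_i often enough that the expected deficit r_i - min |A \<inter> E_i| r_i decays
  geometrically, and 1 - exp (-x) \<ge> (1 - 1/e) min x 1.\<close>

section \<open>Random prefixes of permutations\<close>

abbreviation perms :: "nat \<Rightarrow> (nat \<Rightarrow> nat) set" where
  "perms n \<equiv> {\<sigma>. \<sigma> permutes {1..n}}"

lemma card_image_Int_eq_sum:
  assumes "inj_on \<sigma> T" "finite T"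
  shows "of_nat (card (\<sigma> ` T \<inter> B)) = (\<Sum>s\<in>T. if \<sigma> s \<in> B then 1 else (0 :: 'b :: semiring_1))"
proof -
  have "\<sigma> ` T \<inter> B = \<sigma> ` {s\<in>T. \<sigma> s \<in> B}" by auto
  moreover have "inj_on \<sigma> {s\<in>T. \<sigma> s \<in> B}" using assms(1) by (rule inj_on_subset) auto
  ultimately have "card (\<sigma> ` T \<inter> B) = card {s\<in>T. \<sigma> s \<in> B}" by (simp add: card_image)
  then show ?thesis using assms(2) by (simp flip: sum.inter_filter)
qed

lemma card_prefix_Int_Suc:
  assumes "\<sigma> permutes {1..n}" "j < n"
  shows "card (\<sigma> ` {1..Suc j} \<inter> B) = card (\<sigma> ` {1..j} \<inter> B) + (if \<sigma> (Suc j) \<in> B then 1 else 0)"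
proof -
  have "inj_on \<sigma> {1..Suc j}"
    using permutes_inj_on[OF assms(1)] by (rule inj_on_subset) (use assms(2) in auto)
  then have fresh: "\<sigma> (Suc j) \<notin> \<sigma> ` {1..j}" by (fastforce simp: inj_on_def)
  have "\<sigma> ` {1..Suc j} = insert (\<sigma> (Suc j)) (\<sigma> ` {1..j})"
    by (simp add: atLeastAtMostSuc_conv)
  with fresh show ?thesis by (simp add: Int_insert_left)
qed

lemma card_prefix_Int_add_suffix_Int:
  assumes "\<sigma> permutes {1..n}" "j \<le> n" "B \<subseteq> {1..n}"
  shows "card (\<sigma> ` {1..j} \<inter> B) + card (\<sigma> ` {Suc j..n} \<inter> B) = card B"
proof -
  have inj: "inj_on \<sigma> {1..n}" using assms(1) permutes_inj_on by blast
  have "\<sigma> ` {1..j} \<inter> \<sigma> ` {Suc j..n} = \<sigma> ` ({1..j} \<inter> {Suc j..n})"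
    using inj assms(2) by (intro inj_on_image_Int[symmetric]) auto
  then have disjoint: "(\<sigma> ` {1..j} \<inter> B) \<inter> (\<sigma> ` {Suc j..n} \<inter> B) = {}" by auto
  have "{1..j} \<union> {Suc j..n} = {1..n}" using assms(2) by auto
  then have "\<sigma> ` {1..j} \<union> \<sigma> ` {Suc j..n} = \<sigma> ` {1..n}" by (metis image_Un)
  then have "(\<sigma> ` {1..j} \<inter> B) \<union> (\<sigma> ` {Suc j..n} \<inter> B) = B"
    using permutes_image[OF assms(1)] assms(3) by auto
  with disjoint show ?thesis by (metis card_Un_disjoint finite_Int finite_atLeastAtMost finite_imageI)
qed

lemma sum_permutes_prefix_mem_swap:
  fixes h :: "nat set \<Rightarrow> real"
  assumes "s \<in> {Suc j..n}" "t \<in> {Suc j..n}"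
  shows "(\<Sum>\<sigma>\<in>perms n. h (\<sigma> ` {1..j}) * (if \<sigma> s \<in> B then 1 else 0))
       = (\<Sum>\<sigma>\<in>perms n. h (\<sigma> ` {1..j}) * (if \<sigma> t \<in> B then 1 else 0))"
proof -
  let ?\<tau> = "Transposition.transpose t s"
  let ?g = "\<lambda>\<sigma>. h (\<sigma> ` {1..j}) * (if \<sigma> t \<in> B then 1 else 0)"
  have "?\<tau> ` {1..j} = {1..j}" using assms by (force simp: transpose_def)
  then have prefix: "(\<sigma> \<circ> ?\<tau>) ` {1..j} = \<sigma> ` {1..j}" for \<sigma> by (metis image_comp)
  have "?\<tau> permutes {1..n}" using assms by (intro permutes_swap_id) auto
  then have "sum ?g (perms n) = (\<Sum>\<sigma>\<in>perms n. ?g (\<sigma> \<circ> ?\<tau>))"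
    by (rule sum_permutations_compose_right)
  also have "\<dots> = (\<Sum>\<sigma>\<in>perms n. h (\<sigma> ` {1..j}) * (if \<sigma> s \<in> B then 1 else 0))"
    by (simp only: prefix comp_apply transpose_apply_first)
  finally show ?thesis by (rule sym)
qed

text \<open>Conditioned on the first j values, each later position is equally likely to hold an
  element of B; summing over these n - j positions counts the elements of B not yet seen.\<close>
lemma sum_permutes_prefix_next_exchange:
  fixes h :: "nat set \<Rightarrow> real"
  assumes "j < n"
  shows "(\<Sum>\<sigma>\<in>perms n. h (\<sigma> ` {1..j}) * (if \<sigma> (Suc j) \<in> B then 1 else 0)) * real (n - j)
       = (\<Sum>\<sigma>\<in>perms n. h (\<sigma> ` {1..j}) * real (card (\<sigma> ` {Suc j..n} \<inter> B)))"
proof -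
  let ?g = "\<lambda>t \<sigma>. h (\<sigma> ` {1..j}) * (if \<sigma> t \<in> B then 1 else 0)"
  have "(\<Sum>\<sigma>\<in>perms n. h (\<sigma> ` {1..j}) * real (card (\<sigma> ` {Suc j..n} \<inter> B)))
      = (\<Sum>\<sigma>\<in>perms n. \<Sum>t\<in>{Suc j..n}. ?g t \<sigma>)"
  proof (rule sum.cong[OF refl])
    fix \<sigma> assume "\<sigma> \<in> perms n"
    then have "inj_on \<sigma> {Suc j..n}" by (auto intro: inj_on_subset[OF permutes_inj_on])
    then show "h (\<sigma> ` {1..j}) * real (card (\<sigma> ` {Suc j..n} \<inter> B)) = (\<Sum>t\<in>{Suc j..n}. ?g t \<sigma>)"
      by (simp add: card_image_Int_eq_sum sum_distrib_left)
  qed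
  also have "\<dots> = (\<Sum>t\<in>{Suc j..n}. \<Sum>\<sigma>\<in>perms n. ?g t \<sigma>)"
    by (rule sum.swap)
  also have "\<dots> = (\<Sum>t\<in>{Suc j..n}. \<Sum>\<sigma>\<in>perms n. ?g (Suc j) \<sigma>)"
    using assms by (intro sum.cong refl sum_permutes_prefix_mem_swap) auto
  finally show ?thesis by simp
qed

lemma sum_permutes_mem:
  assumes "B \<subseteq> {1..n}" "s \<in> {1..n}"
  shows "(\<Sum>\<sigma>\<in>perms n. if \<sigma> s \<in> B then 1 else 0) * real n = real (card (perms n)) * real (card B)"
proof -
  have "\<sigma> ` {Suc 0..n} \<inter> B = B" if "\<sigma> \<in> perms n" for \<sigma>
    using permutes_image[of \<sigma> "{1..n}"] that assms(1) by auto
  then have "(\<Sum>\<sigma>\<in>perms n. 1 * (if \<sigma> (Suc 0) \<in> B then 1 else 0)) * real (n - 0)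
      = real (card (perms n)) * real (card B)"
    using sum_permutes_prefix_next_exchange[of 0 n "\<lambda>_. 1"] assms(2) by simp
  moreover have "(\<Sum>\<sigma>\<in>perms n. 1 * (if \<sigma> s \<in> B then 1 else 0))
      = (\<Sum>\<sigma>\<in>perms n. 1 * (if \<sigma> (Suc 0) \<in> B then 1 else (0::real)))"
    using assms(2) by (intro sum_permutes_prefix_mem_swap) auto
  ultimately show ?thesis by simp
qed

lemma sum_permutes_card_prefix_Int:
  assumes "B \<subseteq> {1..n}" "j \<le> n"
  shows "(\<Sum>\<sigma>\<in>perms n. real (card (\<sigma> ` {1..j} \<inter> B)))
       = real j * real (card (perms n)) * real (card B) / real n"
  using assms(2)
proof (induction j)
  case (Suc j)
  then have "j < n" by simp
  then have "(\<Sum>\<sigma>\<in>perms n. real (card (\<sigma> ` {1..Suc j} \<inter> B)))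
      = (\<Sum>\<sigma>\<in>perms n. real (card (\<sigma> ` {1..j} \<inter> B)) + (if \<sigma> (Suc j) \<in> B then 1 else 0))"
    using card_prefix_Int_Suc[OF _ \<open>j < n\<close>] by (intro sum.cong) simp_all
  also have "\<dots> = (\<Sum>\<sigma>\<in>perms n. real (card (\<sigma> ` {1..j} \<inter> B)))
      + (\<Sum>\<sigma>\<in>perms n. if \<sigma> (Suc j) \<in> B then 1 else 0)"
    by (rule sum.distrib)
  moreover have "(\<Sum>\<sigma>\<in>perms n. if \<sigma> (Suc j) \<in> B then 1 else (0::real))
      = real (card (perms n)) * real (card B) / real n"
    using sum_permutes_mem[OF assms(1), of "Suc j"] \<open>j < n\<close> by (simp add: field_simps)
  ultimately show ?case using Suc \<open>j < n\<close> by (simp add: field_simps)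
qed simp

lemma scaled_deficit_le:
  assumes "0 < r" "r \<le> m"
  shows "real m / real r * (real r - real (min x r)) \<le> (if x < r then real m - real x else 0)"
proof (cases "x < r")
  case True
  have "real r * real x \<le> real m * real x" using assms by (intro mult_right_mono) auto
  then have "real m * (real r - real x) \<le> real r * (real m - real x)" by (simp add: algebra_simps)
  with True assms(1) show ?thesis by (simp add: field_simps)
qed simp

text \<open>Each new position hits B with conditional probability (|B| - X) / (n - j), where X
  counts the hits so far; while X < r this is at least |B| / (r n) times the deficit r - X.\<close>
lemma sum_permutes_next_hit_ge:
  assumes B: "B \<subseteq> {1..n}" and r: "0 < r" "r \<le> card B" and "j < n"
  shows "real (card B) / (real r * real n)
           * (\<Sum>\<sigma>\<in>perms n. real r - real (min (card (\<sigma> ` {1..j} \<inter> B)) r))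
       \<le> (\<Sum>\<sigma>\<in>perms n. (if card (\<sigma> ` {1..j} \<inter> B) < r then 1 else 0)
                              * (if \<sigma> (Suc j) \<in> B then 1 else 0))"
    (is "?q * ?S \<le> ?T")
proof -
  let ?m = "card B"
  let ?X = "\<lambda>\<sigma>. card (\<sigma> ` {1..j} \<inter> B)"
  have "?T * real (n - j) = (\<Sum>\<sigma>\<in>perms n. (if ?X \<sigma> < r then 1 else 0) * real (card (\<sigma> ` {Suc j..n} \<inter> B)))"
    using sum_permutes_prefix_next_exchange[of j n "\<lambda>Y. if card (Y \<inter> B) < r then 1 else 0" B] \<open>j < n\<close>
    by simp
  also have "\<dots> = (\<Sum>\<sigma>\<in>perms n. if ?X \<sigma> < r then real ?m - real (?X \<sigma>) else 0)"
  proof (intro sum.cong refl)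
    fix \<sigma> assume "\<sigma> \<in> perms n"
    then have "?X \<sigma> + card (\<sigma> ` {Suc j..n} \<inter> B) = ?m"
      using card_prefix_Int_add_suffix_Int[OF _ _ B] \<open>j < n\<close> by simp
    then have "real (card (\<sigma> ` {Suc j..n} \<inter> B)) = real ?m - real (?X \<sigma>)" by linarith
    then show "(if ?X \<sigma> < r then 1 else 0) * real (card (\<sigma> ` {Suc j..n} \<inter> B))
        = (if ?X \<sigma> < r then real ?m - real (?X \<sigma>) else 0)"
      by (cases "?X \<sigma> < r") (simp_all only: if_True if_False mult_1 mult_zero_left)
  qed
  also have "\<dots> \<ge> (\<Sum>\<sigma>\<in>perms n. real ?m / real r * (real r - real (min (?X \<sigma>) r)))"
    using r by (intro sum_mono scaled_deficit_le)
  also have "(\<Sum>\<sigma>\<in>perms n. real ?m / real r * (real r - real (min (?X \<sigma>) r))) = real ?m / real r * ?S"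
    by (rule sum_distrib_left[symmetric])
  finally have "real ?m / real r * ?S \<le> ?T * real (n - j)" .
  have "?q * ?S = real ?m / real r * ?S / real n" by simp
  also have "\<dots> \<le> real ?m / real r * ?S / real (n - j)"
    using \<open>j < n\<close> by (intro divide_left_mono mult_nonneg_nonneg sum_nonneg) auto
  also have "\<dots> \<le> ?T"
    using \<open>real ?m / real r * ?S \<le> ?T * real (n - j)\<close> \<open>j < n\<close>
    by (simp only: pos_divide_le_eq zero_less_diff of_nat_0_less_iff)
  finally show ?thesis .
qed

lemma sum_permutes_deficit_Suc_le:
  assumes B: "B \<subseteq> {1..n}" and r: "0 < r" "r \<le> card B" and "j < n"
  shows "(\<Sum>\<sigma>\<in>perms n. real r - real (min (card (\<sigma> ` {1..Suc j} \<inter> B)) r))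
       \<le> (1 - real (card B) / (real r * real n))
           * (\<Sum>\<sigma>\<in>perms n. real r - real (min (card (\<sigma> ` {1..j} \<inter> B)) r))"
proof -
  let ?X = "\<lambda>\<sigma>. card (\<sigma> ` {1..j} \<inter> B)"
  let ?hit = "\<lambda>\<sigma>. (if ?X \<sigma> < r then 1 else 0) * (if \<sigma> (Suc j) \<in> B then 1 else (0::real))"
  have "(\<Sum>\<sigma>\<in>perms n. real r - real (min (card (\<sigma> ` {1..Suc j} \<inter> B)) r))
      = (\<Sum>\<sigma>\<in>perms n. (real r - real (min (?X \<sigma>) r)) - ?hit \<sigma>)"
    using card_prefix_Int_Suc[OF _ \<open>j < n\<close>] by (intro sum.cong) auto
  also have "\<dots> = (\<Sum>\<sigma>\<in>perms n. real r - real (min (?X \<sigma>) r)) - (\<Sum>\<sigma>\<in>perms n. ?hit \<sigma>)"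
    by (rule sum_subtractf)
  finally show ?thesis
    using sum_permutes_next_hit_ge[OF B r \<open>j < n\<close>] by (simp add: left_diff_distrib)
qed

lemma sum_permutes_deficit_le:
  assumes B: "B \<subseteq> {1..n}" and r: "0 < r" "r \<le> card B" and "j \<le> n"
  shows "(\<Sum>\<sigma>\<in>perms n. real r - real (min (card (\<sigma> ` {1..j} \<inter> B)) r))
       \<le> (1 - real (card B) / (real r * real n)) ^ j * (real (card (perms n)) * real r)"
  using \<open>j \<le> n\<close>
proof (induction j)
  case (Suc j)
  have "card B \<le> n" using card_mono[OF _ B] by simp
  also have "n \<le> r * n" using r by simp
  finally have "0 \<le> 1 - real (card B) / (real r * real n)"
    using Suc.prems r by (simp add: divide_le_eq_1 flip: of_nat_mult)
  then have "(1 - real (card B) / (real r * real n))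
      * (\<Sum>\<sigma>\<in>perms n. real r - real (min (card (\<sigma> ` {1..j} \<inter> B)) r))
    \<le> (1 - real (card B) / (real r * real n))
      * ((1 - real (card B) / (real r * real n)) ^ j * (real (card (perms n)) * real r))"
    using Suc by (intro mult_left_mono) auto
  with sum_permutes_deficit_Suc_le[OF B r, of j] Suc.prems show ?case by simp
qed simp

text \<open>On [0, 1] the concave function 1 - exp (-x) lies above its chord.\<close>
lemma one_minus_exp_minus_ge:
  fixes x :: real
  assumes "0 \<le> x"
  shows "(1 - 1 / exp 1) * min x 1 \<le> 1 - exp (- x)"
proof (cases "x \<le> 1")
  case True
  have "exp ((1 - x) *\<^sub>R 0 + x *\<^sub>R (-1)) \<le> (1 - x) * exp 0 + x * exp (-1)"
    using convex_onD[OF exp_convex, of x 0 "-1"] assms True by simp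
  with True show ?thesis by (simp add: exp_minus field_simps)
next
  case False
  then have "exp (- x) \<le> exp (-1)" by simp
  with False show ?thesis by (simp add: exp_minus field_simps)
qed

lemma sum_permutes_min_card_prefix_Int_ge_exp:
  assumes B: "B \<subseteq> {1..n}" and r: "0 < r" "r \<le> card B" and "j \<le> n"
  shows "real (card (perms n)) * real r * (1 - exp (- (real j * (real (card B) / (real r * real n)))))
       \<le> (\<Sum>\<sigma>\<in>perms n. real (min (card (\<sigma> ` {1..j} \<inter> B)) r))"
proof -
  let ?N = "real (card (perms n))"
  define q where "q = real (card B) / (real r * real n)"
  have "card B \<le> n" using card_mono[OF _ B] by simp
  also have "n \<le> r * n" using r by simp
  finally have "q \<le> 1" using r unfolding q_def by (auto simp: divide_le_eq_1 simp flip: of_nat_mult)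
  have "(1 - q) ^ j \<le> exp (- q) ^ j"
    using \<open>q \<le> 1\<close> exp_ge_add_one_self[of "- q"] by (intro power_mono) auto
  also have "\<dots> = exp (- (real j * q))" by (simp flip: exp_of_nat_mult)
  finally have decay: "(1 - q) ^ j \<le> exp (- (real j * q))" .
  have "?N * real r * (1 - exp (- (real j * q))) \<le> ?N * real r - ?N * real r * (1 - q) ^ j"
    using mult_left_mono[OF decay, of "?N * real r"] by (simp add: algebra_simps)
  also have "\<dots> \<le> ?N * real r - (\<Sum>\<sigma>\<in>perms n. real r - real (min (card (\<sigma> ` {1..j} \<inter> B)) r))"
    using sum_permutes_deficit_le[OF B r \<open>j \<le> n\<close>] unfolding q_def by (simp add: algebra_simps)
  also have "\<dots> = (\<Sum>\<sigma>\<in>perms n. real (min (card (\<sigma> ` {1..j} \<inter> B)) r))"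
    by (simp add: sum_subtractf)
  finally show ?thesis unfolding q_def .
qed

lemma sum_permutes_min_card_prefix_Int_ge:
  assumes B: "B \<subseteq> {1..n}" and "j \<le> n"
  shows "(1 - 1 / exp 1) * real (card (perms n)) * min (real j * real (card B) / real n) (real r)
       \<le> (\<Sum>\<sigma>\<in>perms n. real (min (card (\<sigma> ` {1..j} \<inter> B)) r))"
proof -
  let ?N = "real (card (perms n))"
  let ?X = "\<lambda>\<sigma>. card (\<sigma> ` {1..j} \<inter> B)"
  have c: "0 \<le> 1 - 1 / exp (1::real)" "1 - 1 / exp (1::real) \<le> 1" by auto
  consider "r = 0" | "card B \<le> r" | "0 < r" "r < card B" by linarith
  then show ?thesis
  proof cases
    case 1
    then have "(1 - 1 / exp 1) * ?N * min (real j * real (card B) / real n) (real r) \<le> 0"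
      using c by (simp add: mult_nonneg_nonpos)
    also have "0 \<le> (\<Sum>\<sigma>\<in>perms n. real (min (?X \<sigma>) r))" by (rule sum_nonneg) simp
    finally show ?thesis .
  next
    case 2
    have "?X \<sigma> \<le> card B" for \<sigma> using finite_subset[OF B] by (intro card_mono) auto
    with 2 have "(\<Sum>\<sigma>\<in>perms n. real (min (?X \<sigma>) r)) = (\<Sum>\<sigma>\<in>perms n. real (?X \<sigma>))"
      by (intro sum.cong) (auto intro: min_absorb1 order_trans)
    also have "\<dots> = 1 * ?N * (real j * real (card B) / real n)"
      using sum_permutes_card_prefix_Int[OF B \<open>j \<le> n\<close>] by simp
    also have "\<dots> \<ge> (1 - 1 / exp 1) * ?N * min (real j * real (card B) / real n) (real r)"
      using c by (intro mult_mono) auto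
    finally show ?thesis .
  next
    case 3
    let ?x = "real j * (real (card B) / (real r * real n))"
    have "min (real j * real (card B) / real n) (real r) = real r * min ?x 1"
      using 3 by (simp add: min_mult_distrib_left)
    then have "(1 - 1 / exp 1) * ?N * min (real j * real (card B) / real n) (real r)
        = ?N * real r * ((1 - 1 / exp 1) * min ?x 1)" by simp
    also have "\<dots> \<le> ?N * real r * (1 - exp (- ?x))"
      by (intro mult_left_mono one_minus_exp_minus_ge) auto
    also have "\<dots> \<le> (\<Sum>\<sigma>\<in>perms n. real (min (?X \<sigma>) r))"
      using 3 by (intro sum_permutes_min_card_prefix_Int_ge_exp[OF B _ _ \<open>j \<le> n\<close>]) auto
    finally show ?thesis .
  qed
qed

section \<open>Matroid rank\<close>

lemma matroid_finite: "matroid E I \<Longrightarrow> finite E"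
  unfolding matroid_def by blast

lemma matroid_indep_subset: "matroid E I \<Longrightarrow> X \<in> I \<Longrightarrow> X \<subseteq> E"
  unfolding matroid_def by blast

lemma matroid_indep_downward: "matroid E I \<Longrightarrow> X \<in> I \<Longrightarrow> Y \<subseteq> X \<Longrightarrow> Y \<in> I"
  unfolding matroid_def by blast

lemma matroid_empty_indep: "matroid E I \<Longrightarrow> {} \<in> I"
  unfolding matroid_def by blast

lemma finite_rk_values:
  assumes "matroid E I"
  shows "finite {card Y | Y. Y \<subseteq> X \<and> Y \<in> I}"
proof -
  have "{card Y | Y. Y \<subseteq> X \<and> Y \<in> I} \<subseteq> card ` Pow E"
    using matroid_indep_subset[OF assms] by auto
  then show ?thesis using matroid_finite[OF assms] finite_subset by blast
qed

lemma card_le_rk: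
  assumes "matroid E I" "Y \<subseteq> X" "Y \<in> I"
  shows "card Y \<le> rk I X"
  unfolding rk_def using finite_rk_values[OF assms(1), of X] assms(2,3) by (intro Max_ge) auto

lemma rk_obtain_indep:
  assumes "matroid E I"
  obtains Y where "Y \<subseteq> X" "Y \<in> I" "card Y = rk I X"
proof -
  have "{card Y | Y. Y \<subseteq> X \<and> Y \<in> I} \<noteq> {}"
    using matroid_empty_indep[OF assms] by auto
  then have "rk I X \<in> {card Y | Y. Y \<subseteq> X \<and> Y \<in> I}"
    unfolding rk_def by (rule Max_in[OF finite_rk_values[OF assms]])
  then show ?thesis using that by auto
qed

lemma rk_mono:
  assumes "matroid E I" "X \<subseteq> Y"
  shows "rk I X \<le> rk I Y"
proof -
  obtain Z where "Z \<subseteq> X" "Z \<in> I" "card Z = rk I X" using rk_obtain_indep[OF assms(1)] .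
  then show ?thesis using card_le_rk[OF assms(1), of Z Y] assms(2) by auto
qed

lemma rk_empty:
  assumes "matroid E I"
  shows "rk I {} = 0"
proof -
  obtain Z where "Z \<subseteq> {}" "Z \<in> I" "card Z = rk I {}" using rk_obtain_indep[OF assms] .
  then show ?thesis by simp
qed

lemma rk_Un_le_card_add:
  assumes m: "matroid E I" and "finite X"
  shows "rk I (X \<union> Y) \<le> card X + rk I Y"
proof -
  obtain Z where Z: "Z \<subseteq> X \<union> Y" "Z \<in> I" "card Z = rk I (X \<union> Y)"
    by (rule rk_obtain_indep[OF m])
  have "Z \<inter> Y \<in> I" by (rule matroid_indep_downward[OF m Z(2) Int_lower1])
  then have "card (Z \<inter> Y) \<le> rk I Y" by (rule card_le_rk[OF m Int_lower2])
  moreover have "card (Z \<inter> X) \<le> card X" using \<open>finite X\<close> by (intro card_mono) auto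
  moreover have "card Z \<le> card (Z \<inter> X) + card (Z \<inter> Y)"
    using card_Un_le[of "Z \<inter> X" "Z \<inter> Y"] Z(1) by (simp add: Int_absorb2 flip: Int_Un_distrib)
  ultimately show ?thesis using Z(3) by linarith
qed

lemma indep_subset_nonloops:
  assumes m: "matroid E I" and "Y \<in> I"
  shows "Y \<subseteq> E - loops E I"
  using matroid_indep_downward[OF m assms(2)] matroid_indep_subset[OF m assms(2)]
  unfolding loops_def by blast

lemma restrict_matroid_nonloops:
  assumes "matroid E I"
  shows "restrict_matroid I (E - loops E I) = I"
  using indep_subset_nonloops[OF assms] unfolding restrict_matroid_def by auto

lemma rk_Int_nonloops:
  assumes "matroid E I"
  shows "rk I (A \<inter> (E - loops E I)) = rk I A"
proof -
  have "{card Y | Y. Y \<subseteq> A \<inter> (E - loops E I) \<and> Y \<in> I} = {card Y | Y. Y \<subseteq> A \<and> Y \<in> I}"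
    using indep_subset_nonloops[OF assms] by blast
  then show ?thesis unfolding rk_def by simp
qed

section \<open>Principal sequences\<close>

lemma chain_subset:
  assumes "\<forall>i<k. F i \<subset> F (Suc i)" "i \<le> j" "j \<le> k"
  shows "F i \<subseteq> F j"
  using assms(2,3)
proof (induction j rule: dec_induct)
  case (step m)
  then have "m < k" by simp
  then have "F m \<subseteq> F (Suc m)" using assms(1) by blast
  with step show ?case by simp
qed simp

lemma minor_ground_disjoint:
  assumes "\<forall>i<k. F i \<subset> F (Suc i)" "i < i'" "i' \<le> k"
  shows "minor_ground F i \<inter> minor_ground F i' = {}"
proof -
  have "F i \<subseteq> F (i' - 1)" using chain_subset[OF assms(1), of i "i' - 1"] assms(2,3) by simp
  then show ?thesis unfolding minor_ground_def by auto
qed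

lemma card_Int_chain_diff:
  assumes ch: "\<forall>i<k. F i \<subset> F (Suc i)" and "finite A" and "t \<le> u" "u \<le> k"
  shows "card (A \<inter> (F u - F t)) = (\<Sum>i=Suc t..u. card (A \<inter> minor_ground F i))"
  using assms(3,4)
proof (induction u rule: dec_induct)
  case (step m)
  have "m < k" using step.prems by simp
  then have "F t \<subseteq> F m" "F m \<subseteq> F (Suc m)"
    using chain_subset[OF ch step(1)] ch by auto
  then have "A \<inter> (F (Suc m) - F t) = (A \<inter> (F m - F t)) \<union> (A \<inter> minor_ground F (Suc m))"
    unfolding minor_ground_def by auto
  moreover have "(A \<inter> (F m - F t)) \<inter> (A \<inter> minor_ground F (Suc m)) = {}"
    unfolding minor_ground_def by auto
  ultimately have "card (A \<inter> (F (Suc m) - F t))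
      = card (A \<inter> (F m - F t)) + card (A \<inter> minor_ground F (Suc m))"
    using \<open>finite A\<close> by (simp add: card_Un_disjoint)
  with step show ?case by simp
qed simp

lemma minor_rank_eq_rk_diff:
  assumes "F (i - 1) \<subseteq> F i"
  shows "minor_rank I F i = rk I (F i) - rk I (F (i - 1))"
proof -
  have "(F i - F (i - 1)) \<union> F (i - 1) = F i" using assms by auto
  then show ?thesis unfolding minor_rank_def contract_rk_def minor_ground_def by simp
qed

lemma rk_chain_eq_sum_minor_rank:
  assumes m: "matroid E I" and ch: "\<forall>i<k. F i \<subset> F (Suc i)" and "F 0 = {}" and "t \<le> k"
  shows "real (rk I (F t)) = (\<Sum>i=1..t. real (minor_rank I F i))"
proof -
  have "real (minor_rank I F i) = real (rk I (F i)) - real (rk I (F (i - 1)))" if "i \<in> {1..t}" for i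
  proof -
    have "F (i - 1) \<subseteq> F i" using chain_subset[OF ch, of "i - 1" i] that \<open>t \<le> k\<close> by auto
    then show ?thesis by (simp add: minor_rank_eq_rk_diff rk_mono[OF m] of_nat_diff)
  qed
  then have "(\<Sum>i=1..t. real (minor_rank I F i)) = (\<Sum>i=Suc 0..t. real (rk I (F i)) - real (rk I (F (i - 1))))"
    by simp
  also have "\<dots> = real (rk I (F t))"
    using sum_telescope''[of 0 t "\<lambda>i. real (rk I (F i))"] \<open>F 0 = {}\<close> rk_empty[OF m] by simp
  finally show ?thesis ..
qed

text \<open>F (i - 1) and F i both minimise flam for lam i, so flam takes the same value on them.\<close>
lemma principal_sequence_card_minor_ground:
  assumes m: "matroid E I" and "S \<subseteq> E" and ps: "principal_sequence I S k F lam" and i: "i \<in> {1..k}"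
  shows "lam i * real (minor_rank I F i) = real (card (minor_ground F i))"
proof -
  have min: "F (i - 1) \<in> minimizers I S (lam i)" "F i \<in> minimizers I S (lam i)"
    using ps i unfolding principal_sequence_def by auto
  have "F (i - 1) \<subseteq> F i"
    using ps i chain_subset[of k F "i - 1" i] unfolding principal_sequence_def by auto
  moreover have "finite (F i)"
    using min(2) \<open>S \<subseteq> E\<close> matroid_finite[OF m] unfolding minimizers_def by (auto intro: finite_subset)
  ultimately have "card (minor_ground F i) = card (F i) - card (F (i - 1))"
    "card (F (i - 1)) \<le> card (F i)" "rk I (F (i - 1)) \<le> rk I (F i)"
    unfolding minor_ground_def by (auto intro: card_Diff_subset finite_subset card_mono rk_mono[OF m])
  moreover have "flam I (lam i) (F i) = flam I (lam i) (F (i - 1))"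
    using min unfolding minimizers_def by (simp add: order_antisym)
  ultimately show ?thesis
    using \<open>F (i - 1) \<subseteq> F i\<close> by (simp add: flam_def minor_rank_eq_rk_diff of_nat_diff algebra_simps)
qed

lemma rk_le_sum_minor_rank_add_card:
  assumes m: "matroid E I" and "F 0 = {}" and "F k = E - loops E I"
    and ch: "\<forall>i<k. F i \<subset> F (Suc i)" and "finite A" and "t \<le> k"
  shows "real (rk I A) \<le> (\<Sum>i=1..t. real (minor_rank I F i))
           + (\<Sum>i=Suc t..k. real (card (A \<inter> minor_ground F i)))"
proof -
  have "rk I A = rk I (A \<inter> F k)" using rk_Int_nonloops[OF m] \<open>F k = E - loops E I\<close> by simp
  also have "\<dots> \<le> rk I ((A \<inter> (F k - F t)) \<union> F t)" by (intro rk_mono[OF m]) auto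
  also have "\<dots> \<le> card (A \<inter> (F k - F t)) + rk I (F t)"
    using \<open>finite A\<close> by (intro rk_Un_le_card_add[OF m]) simp
  finally have "real (rk I A) \<le> real (card (A \<inter> (F k - F t))) + real (rk I (F t))" by linarith
  then show ?thesis
    using card_Int_chain_diff[OF ch \<open>finite A\<close> \<open>t \<le> k\<close> order_refl]
      rk_chain_eq_sum_minor_rank[OF m ch \<open>F 0 = {}\<close> \<open>t \<le> k\<close>] by (simp add: add.commute)
qed

lemma sum_min_le_rk_partition:
  assumes ch: "\<forall>i<k. F i \<subset> F (Suc i)" and "finite A"
  shows "(\<Sum>i=1..k. min (card (A \<inter> minor_ground F i)) (rs i)) \<le> rk (partition_indep k (minor_ground F) rs) A"
proof -
  let ?P = "partition_indep k (minor_ground F) rs"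
  have "\<exists>T. T \<subseteq> A \<inter> minor_ground F i \<and> card T = min (card (A \<inter> minor_ground F i)) (rs i)" for i
    by (meson obtain_subset_with_card_n min.cobounded1)
  then obtain Is where Is: "\<And>i. Is i \<subseteq> A \<inter> minor_ground F i"
    "\<And>i. card (Is i) = min (card (A \<inter> minor_ground F i)) (rs i)"
    by metis
  have "(\<Union>i\<in>{1..k}. Is i) \<in> ?P"
    unfolding partition_indep_def using Is by (intro CollectI exI[of _ Is]) auto
  moreover have "(\<Union>i\<in>{1..k}. Is i) \<subseteq> A" using Is by auto
  moreover have "finite {card Y | Y. Y \<subseteq> A \<and> Y \<in> ?P}"
    by (rule finite_subset[of _ "{..card A}"]) (auto intro: card_mono[OF \<open>finite A\<close>])
  ultimately have "card (\<Union>i\<in>{1..k}. Is i) \<le> rk ?P A"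
    unfolding rk_def by (intro Max_ge) auto
  moreover have "Is i \<inter> Is i' = {}" if "i \<in> {1..k}" "i' \<in> {1..k}" "i \<noteq> i'" for i i'
    using minor_ground_disjoint[OF ch, of i i'] minor_ground_disjoint[OF ch, of i' i] Is(1)[of i] Is(1)[of i'] that
    by (cases "i < i'") auto
  then have "card (\<Union>i\<in>{1..k}. Is i) = (\<Sum>i=1..k. card (Is i))"
    using finite_subset[OF Is(1) finite_Int[OF disjI1, OF \<open>finite A\<close>]] by (intro card_UN_disjoint) auto
  ultimately show ?thesis using Is(2) by simp
qed

lemma obtain_threshold:
  fixes x :: "nat \<Rightarrow> real"
  assumes "\<And>i. 1 \<le> i \<Longrightarrow> i < k \<Longrightarrow> x (Suc i) \<le> x i"
  obtains t where "t \<le> k" "\<And>i. i \<in> {1..t} \<Longrightarrow> 1 \<le> x i" "\<And>i. i \<in> {Suc t..k} \<Longrightarrow> x i < 1"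
  using assms
proof (induction k arbitrary: thesis)
  case 0
  then show ?case by fastforce
next
  case (Suc k)
  obtain t where t: "t \<le> k" "\<And>i. i \<in> {1..t} \<Longrightarrow> 1 \<le> x i" "\<And>i. i \<in> {Suc t..k} \<Longrightarrow> x i < 1"
    using Suc.IH Suc.prems(2) by (metis less_SucI)
  show ?case
  proof (cases "t = k \<and> 1 \<le> x (Suc k)")
    case True
    with t show ?thesis by (intro Suc.prems(1)[of "Suc k"]) (auto simp: le_Suc_eq)
  next
    case False
    have "x (Suc k) < 1"
    proof (cases "t = k")
      case False
      with t have "x k < 1" "1 \<le> k" by auto
      then show ?thesis using Suc.prems(2)[of k] by simp
    qed (use False in auto)
    with t show ?thesis by (intro Suc.prems(1)[of t]) (auto simp: le_Suc_eq)
  qed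
qed

lemma sum_min_split_at_threshold:
  fixes a b :: "nat \<Rightarrow> real"
  assumes "t \<le> k" "\<And>i. i \<in> {1..t} \<Longrightarrow> b i \<le> a i" "\<And>i. i \<in> {Suc t..k} \<Longrightarrow> a i \<le> b i"
  shows "(\<Sum>i=1..k. min (a i) (b i)) = (\<Sum>i=1..t. b i) + (\<Sum>i=Suc t..k. a i)"
proof -
  have "{1..k} = {1..t} \<union> {Suc t..k}" using assms(1) by auto
  then have "(\<Sum>i=1..k. min (a i) (b i)) = (\<Sum>i=1..t. min (a i) (b i)) + (\<Sum>i=Suc t..k. min (a i) (b i))"
    by (simp add: sum.union_disjoint)
  also have "\<dots> = (\<Sum>i=1..t. b i) + (\<Sum>i=Suc t..k. a i)"
    using assms(2,3) by (intro arg_cong2[where f = "(+)"] sum.cong refl) (simp_all add: min_absorb1 min_absorb2)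
  finally show ?thesis .
qed

lemma obtain_threshold_split:
  fixes p :: real and lam b :: "nat \<Rightarrow> real"
  assumes "0 \<le> p" "\<And>i. 1 \<le> i \<Longrightarrow> i < k \<Longrightarrow> lam (Suc i) \<le> lam i" "\<And>i. 0 \<le> b i"
  obtains t where "t \<le> k"
    "(\<Sum>i=1..k. min (p * lam i * b i) (b i)) = (\<Sum>i=1..t. b i) + (\<Sum>i=Suc t..k. p * lam i * b i)"
proof -
  have "p * lam (Suc i) \<le> p * lam i" if "1 \<le> i" "i < k" for i
    using assms(2)[OF that] assms(1) by (rule mult_left_mono)
  then obtain t where "t \<le> k" and t: "\<And>i. i \<in> {1..t} \<Longrightarrow> 1 \<le> p * lam i"
    "\<And>i. i \<in> {Suc t..k} \<Longrightarrow> p * lam i < 1"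
    using obtain_threshold[of k "\<lambda>i. p * lam i"] by blast
  have "b i \<le> p * lam i * b i" if "i \<in> {1..t}" for i
    using mult_right_mono[OF t(1)[OF that] assms(3)] by simp
  moreover have "p * lam i * b i \<le> b i" if "i \<in> {Suc t..k}" for i
    using mult_right_mono[OF less_imp_le[OF t(2)[OF that]] assms(3)] by simp
  ultimately have "(\<Sum>i=1..k. min (p * lam i * b i) (b i))
      = (\<Sum>i=1..t. b i) + (\<Sum>i=Suc t..k. p * lam i * b i)"
    by (rule sum_min_split_at_threshold[OF \<open>t \<le> k\<close>])
  with \<open>t \<le> k\<close> show ?thesis by (rule that)
qed

section \<open>Expected ranks of a random prefix\<close>

lemma card_image_prefix_Int:
  fixes n j :: nat
  assumes e: "bij_betw e {1..n} E" and "\<sigma> permutes {1..n}" "j \<le> n"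
  shows "card (e ` \<sigma> ` {1..j} \<inter> G) = card (\<sigma> ` {1..j} \<inter> {x\<in>{1..n}. e x \<in> G})"
proof -
  have "\<sigma> ` {1..j} \<subseteq> {1..n}"
  proof -
    have "\<sigma> ` {1..j} \<subseteq> \<sigma> ` {1..n}" using \<open>j \<le> n\<close> by (intro image_mono) auto
    then show ?thesis using permutes_image[OF assms(2)] by simp
  qed
  then have "e ` \<sigma> ` {1..j} \<inter> G = e ` (\<sigma> ` {1..j} \<inter> {x\<in>{1..n}. e x \<in> G})" by auto
  moreover have "inj_on e (\<sigma> ` {1..j} \<inter> {x\<in>{1..n}. e x \<in> G})"
    using bij_betw_imp_inj_on[OF e] by (rule inj_on_subset) auto
  ultimately show ?thesis by (simp add: card_image)
qed

lemma card_bij_preimage: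
  fixes n :: nat
  assumes e: "bij_betw e {1..n} E" and "G \<subseteq> E"
  shows "card {x\<in>{1..n}. e x \<in> G} = card G"
proof -
  have "e ` {x\<in>{1..n}. e x \<in> G} = G" using bij_betw_imp_surj_on[OF e] \<open>G \<subseteq> E\<close> by auto
  moreover have "inj_on e {x\<in>{1..n}. e x \<in> G}"
    using bij_betw_imp_inj_on[OF e] by (rule inj_on_subset) auto
  ultimately show ?thesis using card_image by metis
qed

lemma sum_permutes_card_image_prefix_Int:
  assumes e: "bij_betw e {1..n} E" and "G \<subseteq> E" "j \<le> n"
  shows "(\<Sum>\<sigma>\<in>perms n. real (card (e ` \<sigma> ` {1..j} \<inter> G)))
       = real j * real (card (perms n)) * real (card G) / real n"
proof -
  let ?B = "{x\<in>{1..n}. e x \<in> G}"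
  have "(\<Sum>\<sigma>\<in>perms n. real (card (e ` \<sigma> ` {1..j} \<inter> G)))
      = (\<Sum>\<sigma>\<in>perms n. real (card (\<sigma> ` {1..j} \<inter> ?B)))"
    using card_image_prefix_Int[OF e _ \<open>j \<le> n\<close>] by (intro sum.cong) auto
  also have "\<dots> = real j * real (card (perms n)) * real (card G) / real n"
    using sum_permutes_card_prefix_Int[of ?B n j] card_bij_preimage[OF e \<open>G \<subseteq> E\<close>] \<open>j \<le> n\<close>
    by (simp add: subset_eq)
  finally show ?thesis .
qed

lemma sum_permutes_min_card_image_prefix_Int_ge:
  assumes e: "bij_betw e {1..n} E" and "G \<subseteq> E" "j \<le> n"
  shows "(1 - 1 / exp 1) * real (card (perms n)) * min (real j * real (card G) / real n) (real r)
       \<le> (\<Sum>\<sigma>\<in>perms n. real (min (card (e ` \<sigma> ` {1..j} \<inter> G)) r))"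
proof -
  let ?B = "{x\<in>{1..n}. e x \<in> G}"
  have "(1 - 1 / exp 1) * real (card (perms n)) * min (real j * real (card G) / real n) (real r)
      \<le> (\<Sum>\<sigma>\<in>perms n. real (min (card (\<sigma> ` {1..j} \<inter> ?B)) r))"
    using sum_permutes_min_card_prefix_Int_ge[of ?B n j r] card_bij_preimage[OF e \<open>G \<subseteq> E\<close>] \<open>j \<le> n\<close>
    by (simp add: subset_eq)
  also have "\<dots> = (\<Sum>\<sigma>\<in>perms n. real (min (card (e ` \<sigma> ` {1..j} \<inter> G)) r))"
    using card_image_prefix_Int[OF e _ \<open>j \<le> n\<close>] by (intro sum.cong) auto
  finally show ?thesis .
qed

lemma sum_permutes_rk_le_split:
  assumes m: "matroid E I" and e: "bij_betw e {1..n} E" and "F 0 = {}" and Fk: "F k = E - loops E I"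
    and ch: "\<forall>i<k. F i \<subset> F (Suc i)" and "t \<le> k" "j \<le> n"
  shows "(\<Sum>\<sigma>\<in>perms n. real (rk I (e ` \<sigma> ` {1..j})))
       \<le> real (card (perms n)) * (\<Sum>i=1..t. real (minor_rank I F i))
         + (\<Sum>i=Suc t..k. real (card (perms n)) * (real j * real (card (minor_ground F i)) / real n))"
proof -
  let ?c = "\<lambda>\<sigma> i. real (card (e ` \<sigma> ` {1..j} \<inter> minor_ground F i))"
  have ground: "minor_ground F i \<subseteq> E" if "i \<in> {1..k}" for i
    using chain_subset[OF ch, of i k] that Fk unfolding minor_ground_def by auto
  have "(\<Sum>\<sigma>\<in>perms n. real (rk I (e ` \<sigma> ` {1..j})))
      \<le> (\<Sum>\<sigma>\<in>perms n. (\<Sum>i=1..t. real (minor_rank I F i)) + (\<Sum>i=Suc t..k. ?c \<sigma> i))"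
    using rk_le_sum_minor_rank_add_card[OF m \<open>F 0 = {}\<close> Fk ch _ \<open>t \<le> k\<close>] by (intro sum_mono) simp
  also have "\<dots> = real (card (perms n)) * (\<Sum>i=1..t. real (minor_rank I F i))
      + (\<Sum>\<sigma>\<in>perms n. \<Sum>i=Suc t..k. ?c \<sigma> i)"
    by (simp add: sum.distrib)
  also have "(\<Sum>\<sigma>\<in>perms n. \<Sum>i=Suc t..k. ?c \<sigma> i) = (\<Sum>i=Suc t..k. \<Sum>\<sigma>\<in>perms n. ?c \<sigma> i)"
    by (rule sum.swap)
  also have "\<dots> = (\<Sum>i=Suc t..k. real (card (perms n)) * (real j * real (card (minor_ground F i)) / real n))"
    using sum_permutes_card_image_prefix_Int[OF e ground \<open>j \<le> n\<close>] by (intro sum.cong) auto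
  finally show ?thesis .
qed

lemma sum_permutes_rk_le:
  assumes m: "matroid E I" and e: "bij_betw e {1..n} E"
    and ps: "principal_sequence I (E - loops E I) k F lam" and "j \<le> n"
  shows "(\<Sum>\<sigma>\<in>perms n. real (rk I (e ` \<sigma> ` {1..j})))
       \<le> real (card (perms n)) * (\<Sum>i=1..k. min (real j * real (card (minor_ground F i)) / real n)
                                                (real (minor_rank I F i)))"
proof -
  have "F 0 = {}" and Fk: "F k = E - loops E I" and ch: "\<forall>i<k. F i \<subset> F (Suc i)"
    and lam: "\<And>i. 1 \<le> i \<Longrightarrow> i < k \<Longrightarrow> lam (Suc i) \<le> lam i"
    using ps unfolding principal_sequence_def by (auto simp: less_imp_le)
  let ?N = "real (card (perms n))"
  let ?a = "\<lambda>i. real j * real (card (minor_ground F i)) / real n"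
  let ?b = "\<lambda>i. real (minor_rank I F i)"
  have a: "?a i = real j / real n * lam i * ?b i" if "i \<in> {1..k}" for i
    using principal_sequence_card_minor_ground[OF m _ ps that] by simp
  obtain t where "t \<le> k" and split: "(\<Sum>i=1..k. min (real j / real n * lam i * ?b i) (?b i))
      = (\<Sum>i=1..t. ?b i) + (\<Sum>i=Suc t..k. real j / real n * lam i * ?b i)"
    by (rule obtain_threshold_split[of "real j / real n" k lam ?b]) (use lam in auto)
  have "(\<Sum>i=1..k. min (?a i) (?b i)) = (\<Sum>i=1..k. min (real j / real n * lam i * ?b i) (?b i))"
    using a by (intro sum.cong refl) (simp only:)
  also note split
  also have "(\<Sum>i=Suc t..k. real j / real n * lam i * ?b i) = (\<Sum>i=Suc t..k. ?a i)"
  proof (intro sum.cong refl)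
    fix i assume "i \<in> {Suc t..k}"
    then have "i \<in> {1..k}" by simp
    then show "real j / real n * lam i * ?b i = ?a i" by (simp only: a)
  qed
  finally have min_eq: "(\<Sum>i=1..k. min (?a i) (?b i)) = (\<Sum>i=1..t. ?b i) + (\<Sum>i=Suc t..k. ?a i)" .
  have "(\<Sum>\<sigma>\<in>perms n. real (rk I (e ` \<sigma> ` {1..j}))) \<le> ?N * (\<Sum>i=1..t. ?b i) + (\<Sum>i=Suc t..k. ?N * ?a i)"
    by (rule sum_permutes_rk_le_split[OF m e \<open>F 0 = {}\<close> Fk ch \<open>t \<le> k\<close> \<open>j \<le> n\<close>])
  also have "\<dots> = ?N * (\<Sum>i=1..k. min (?a i) (?b i))"
    unfolding min_eq by (simp add: distrib_left sum_distrib_left)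
  finally show ?thesis .
qed

lemma sum_permutes_rk_partition_ge:
  assumes e: "bij_betw e {1..n} E" and ch: "\<forall>i<k. F i \<subset> F (Suc i)" and "F k \<subseteq> E" and "j \<le> n"
  shows "(1 - 1 / exp 1) * real (card (perms n))
           * (\<Sum>i=1..k. min (real j * real (card (minor_ground F i)) / real n) (real (rs i)))
       \<le> (\<Sum>\<sigma>\<in>perms n. real (rk (partition_indep k (minor_ground F) rs) (e ` \<sigma> ` {1..j})))"
proof -
  have ground: "minor_ground F i \<subseteq> E" if "i \<in> {1..k}" for i
    using chain_subset[OF ch, of i k] that \<open>F k \<subseteq> E\<close> unfolding minor_ground_def by auto
  have "(1 - 1 / exp 1) * real (card (perms n))
           * (\<Sum>i=1..k. min (real j * real (card (minor_ground F i)) / real n) (real (rs i)))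
      \<le> (\<Sum>i=1..k. \<Sum>\<sigma>\<in>perms n. real (min (card (e ` \<sigma> ` {1..j} \<inter> minor_ground F i)) (rs i)))"
    unfolding sum_distrib_left
    using sum_permutes_min_card_image_prefix_Int_ge[OF e ground \<open>j \<le> n\<close>] by (intro sum_mono) simp
  also have "\<dots> = (\<Sum>\<sigma>\<in>perms n. real (\<Sum>i=1..k. min (card (e ` \<sigma> ` {1..j} \<inter> minor_ground F i)) (rs i)))"
    by (subst sum.swap) simp
  also have "\<dots> \<le> (\<Sum>\<sigma>\<in>perms n. real (rk (partition_indep k (minor_ground F) rs) (e ` \<sigma> ` {1..j})))"
    using sum_min_le_rk_partition[OF ch] by (intro sum_mono) (simp only: of_nat_le_iff, simp)
  finally show ?thesis .
qed

theorem lemma7: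
  fixes E :: "'a set" and I :: "'a set set" and e :: "nat \<Rightarrow> 'a" and n k j :: nat
    and F :: "nat \<Rightarrow> 'a set" and lam :: "nat \<Rightarrow> real"
  assumes "matroid E I"
    and "bij_betw e {1..n} E"
    and "principal_sequence (restrict_matroid I (E - loops E I)) (E - loops E I) k F lam"
    and "1 \<le> j" and "j \<le> n"
  shows "measure_pmf.expectation (pmf_of_set {\<sigma>. \<sigma> permutes {1..n}})
           (\<lambda>\<sigma>. real (rk (partition_indep k (minor_ground F)
                        (minor_rank (restrict_matroid I (E - loops E I)) F)) (e ` \<sigma> ` {1..j})))
         \<ge> (1 - 1 / exp 1) * measure_pmf.expectation (pmf_of_set {\<sigma>. \<sigma> permutes {1..n}})
           (\<lambda>\<sigma>. real (rk I (e ` \<sigma> ` {1..j})))"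
proof -
  let ?N = "real (card (perms n))"
  let ?M = "\<Sum>i=1..k. min (real j * real (card (minor_ground F i)) / real n) (real (minor_rank I F i))"
  have ps: "principal_sequence I (E - loops E I) k F lam"
    using assms(3) unfolding restrict_matroid_nonloops[OF assms(1)] .
  then have "\<forall>i<k. F i \<subset> F (Suc i)" "F k \<subseteq> E" unfolding principal_sequence_def by auto
  have fin: "finite (perms n)" "perms n \<noteq> {}"
    using finite_permutations[of "{1..n}"] permutes_id by blast+
  then have "0 < ?N" by (simp add: card_gt_0_iff)
  have "(1 - 1 / exp 1) * (\<Sum>\<sigma>\<in>perms n. real (rk I (e ` \<sigma> ` {1..j}))) \<le> (1 - 1 / exp 1) * (?N * ?M)"
    using sum_permutes_rk_le[OF assms(1,2) ps \<open>j \<le> n\<close>] by (intro mult_left_mono) auto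
  also have "\<dots> \<le> (\<Sum>\<sigma>\<in>perms n. real (rk (partition_indep k (minor_ground F) (minor_rank I F)) (e ` \<sigma> ` {1..j})))"
    using sum_permutes_rk_partition_ge[OF assms(2) \<open>\<forall>i<k. F i \<subset> F (Suc i)\<close> \<open>F k \<subseteq> E\<close> \<open>j \<le> n\<close>]
    by (simp add: mult.assoc)
  finally show ?thesis
    unfolding integral_pmf_of_set[OF fin(2,1)] restrict_matroid_nonloops[OF assms(1)]
    using divide_right_mono[of _ _ ?N] \<open>0 < ?N\<close> by simp
qed

end
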